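(* Let $1<p<\infty$ be fixed. Let $(\lambda_n)_{n\ge1}$ be positive real numbers, $\Lambda_n=\sum_{i=1}^n\lambda_i$, and let $A=(a_{n,k})$ be the weighted mean matrix with $a_{n,k}=\lambda_k/\Lambda_n$ for $1\le k\le n$ and $a_{n,k}=0$ for $k>n$. Suppose there exists a constant $L$ with $0<L<p$ such that for every integer $n\ge1$, \[ \sum_{k=1}^{n}\frac{\lambda_k}{\Lambda_n}\prod_{i=k}^{n}\Big(\frac{\Lambda_{i+1}/\lambda_{i+1}-L/p}{\Lambda_i/\lambda_i}\Big)^{1/(p-1)}\le \frac{p}{p-L}. \] Then $\|A\|_{p,p}\le \frac{p}{p-L}$.
   Context: For $p\ge1$, $l^p$ denotes the space of complex sequences $\mathbf a=(a_n)_{n\ge1}$ with $\|\mathbf a\|_p=(\sum_n|a_n|^p)^{1/p}<\infty$. For an infinite matrix $C=(c_{n,k})$, $\|C\|_{p,p}=\sup_{\|\mathbf a\|_p=1}\|C\mathbf a\|_p$, where $(C\mathbf a)_n=\sum_k c_{n,k}a_k$; equivalently the conclusion says $\sum_{n=1}^\infty\big|\sum_{k=1}^n\frac{\lambda_k a_k}{\Lambda_n}\big|^p\le\big(\frac{p}{p-L}\big)^p\sum_{n=1}^\infty|a_n|^p$ for all $\mathbf a\in l^p$. *)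

theory Defs
  imports "HOL-Analysis.Analysis"
begin

text \<open>Sequences are indexed from 1; the value at index 0 is irrelevant.
  Partial sums Lambda_n = sum of lambda_i for i = 1..n.\<close>
definition Lam :: "(nat \<Rightarrow> real) \<Rightarrow> nat \<Rightarrow> real" where
  "Lam lam n = (\<Sum>i=1..n. lam i)"

definition wmean :: "(nat \<Rightarrow> real) \<Rightarrow> nat \<Rightarrow> nat \<Rightarrow> real" where
  "wmean lam n k = (if 1 \<le> k \<and> k \<le> n then lam k / Lam lam n else 0)"

definition wmean_apply :: "(nat \<Rightarrow> real) \<Rightarrow> (nat \<Rightarrow> complex) \<Rightarrow> nat \<Rightarrow> complex" where
  "wmean_apply lam a n = (\<Sum>k=1..n. complex_of_real (wmean lam n k) * a k)"

end

theory Submission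
  imports Defs
begin

text \<open>
  This is Schur's test. Put \<open>c = L/p\<close>, \<open>U = p/(p - L) = 1/(1 - c)\<close>, \<open>t\<^sub>i = \<Lambda>\<^sub>i/\<lambda>\<^sub>i\<close> and
  \<open>V\<^sub>k = \<Prod>\<^bsub>1 \<le> i < k\<^esub> t\<^sub>i / (t\<^sub>i\<^sub>+\<^sub>1 - c)\<close> (\<open>schur_weight lam c\<close>), and weight the columns by
  \<open>w\<^sub>k = V\<^sub>k powr (1/(p - 1))\<close>. The product in the hypothesis is then exactly \<open>w\<^sub>k / w\<^sub>n\<^sub>+\<^sub>1\<close>,
  so the hypothesis is the row condition \<open>\<Sum>\<^sub>k a\<^sub>n\<^sub>k w\<^sub>k \<le> U w\<^sub>n\<^sub>+\<^sub>1\<close>. The recursion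
  \<open>V\<^sub>n\<^sub>+\<^sub>1 (t\<^sub>n\<^sub>+\<^sub>1 - c) = V\<^sub>n t\<^sub>n\<close> turns the column sums \<open>\<Sum>\<^sub>n a\<^sub>n\<^sub>k V\<^sub>n\<^sub>+\<^sub>1\<close> into
  telescoping sums, bounded by \<open>U V\<^sub>k\<close>. Holder's inequality in each row followed by an
  exchange of summations bounds every partial sum of \<open>\<Sum>\<^sub>n |(A a)\<^sub>n|\<^sup>p\<close> by \<open>U\<^sup>p \<Sum>\<^sub>k |a\<^sub>k|\<^sup>p\<close>.
\<close>

lemma convex_on_powr_nonneg:
  fixes p :: real
  assumes "1 \<le> p"
  shows "convex_on {0..} (\<lambda>x. x powr p)"
proof
  fix t x y :: real
  assume t: "0 < t" "t < 1" and x: "x \<in> {0..}" and y: "y \<in> {0..}"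
  have shrink: "(s * z) powr p \<le> s * z powr p" if "0 \<le> s" "s \<le> 1" "0 \<le> z" for s z :: real
  proof -
    have "s powr p \<le> s"
      using powr_mono'[of 1 p s] that assms by auto
    then show ?thesis
      using that by (simp add: powr_mult mult_right_mono)
  qed
  show "((1 - t) *\<^sub>R x + t *\<^sub>R y) powr p \<le> (1 - t) * x powr p + t * y powr p"
  proof (cases "x = 0 \<or> y = 0")
    case True
    then show ?thesis
      using shrink[of t y] shrink[of "1 - t" x] t x y assms by auto
  next
    case False
    with x y have "x \<in> {0<..}" "y \<in> {0<..}" by auto
    with convex_onD[OF powr_convex[OF assms]] t show ?thesis by auto
  qed
qed (simp add: convex_real_interval)

lemma weighted_sum_powr_le:
  fixes p :: real and \<alpha> y :: "'a \<Rightarrow> real"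
  assumes "1 \<le> p" "finite A" "\<And>i. i \<in> A \<Longrightarrow> 0 \<le> \<alpha> i" "\<And>i. i \<in> A \<Longrightarrow> 0 \<le> y i"
  shows "(\<Sum>i\<in>A. \<alpha> i * y i) powr p \<le> sum \<alpha> A powr (p - 1) * (\<Sum>i\<in>A. \<alpha> i * y i powr p)"
proof (cases "sum \<alpha> A = 0")
  case True
  with assms have "\<forall>i\<in>A. \<alpha> i = 0" by (simp add: sum_nonneg_eq_0_iff)
  then show ?thesis by simp
next
  case False
  let ?S = "sum \<alpha> A"
  have S: "0 < ?S" using False assms by (simp add: sum_nonneg order_less_le)
  then have ne: "A \<noteq> {}" by auto
  have "(\<Sum>i\<in>A. (\<alpha> i / ?S) *\<^sub>R y i) powr p \<le> (\<Sum>i\<in>A. (\<alpha> i / ?S) * y i powr p)"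
    using convex_on_sum[OF assms(2) ne convex_on_powr_nonneg[OF assms(1)], of "\<lambda>i. \<alpha> i / ?S" y]
      S False assms by (auto simp: sum_divide_distrib[symmetric])
  then have "((\<Sum>i\<in>A. \<alpha> i * y i) / ?S) powr p \<le> (\<Sum>i\<in>A. \<alpha> i * y i powr p) / ?S"
    by (simp add: sum_divide_distrib[symmetric])
  moreover have "((\<Sum>i\<in>A. \<alpha> i * y i) / ?S) powr p = (\<Sum>i\<in>A. \<alpha> i * y i) powr p / ?S powr p"
    using assms by (auto intro!: powr_divide sum_nonneg)
  ultimately have "(\<Sum>i\<in>A. \<alpha> i * y i) powr p \<le> (\<Sum>i\<in>A. \<alpha> i * y i powr p) / ?S * ?S powr p"
    using S by (simp add: divide_le_eq)
  also have "\<dots> = ?S powr (p - 1) * (\<Sum>i\<in>A. \<alpha> i * y i powr p)"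
    using S by (simp add: powr_diff field_simps)
  finally show ?thesis .
qed

lemma schur_test_powr:
  fixes p \<alpha> \<beta> :: real and K :: "'i \<Rightarrow> 'j \<Rightarrow> real" and u :: "'i \<Rightarrow> real" and w x :: "'j \<Rightarrow> real"
  assumes p: "1 \<le> p" and fin: "finite I" "finite J" and \<alpha>: "0 \<le> \<alpha>"
    and K: "\<And>i j. i \<in> I \<Longrightarrow> j \<in> J \<Longrightarrow> 0 \<le> K i j"
    and u: "\<And>i. i \<in> I \<Longrightarrow> 0 < u i"
    and w: "\<And>j. j \<in> J \<Longrightarrow> 0 < w j"
    and x: "\<And>j. j \<in> J \<Longrightarrow> 0 \<le> x j"
    and row: "\<And>i. i \<in> I \<Longrightarrow> (\<Sum>j\<in>J. K i j * w j) \<le> \<alpha> * u i"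
    and column: "\<And>j. j \<in> J \<Longrightarrow> (\<Sum>i\<in>I. K i j * u i powr (p - 1)) \<le> \<beta> * w j powr (p - 1)"
  shows "(\<Sum>i\<in>I. (\<Sum>j\<in>J. K i j * x j) powr p) \<le> \<alpha> powr (p - 1) * \<beta> * (\<Sum>j\<in>J. x j powr p)"
proof -
  define z where "z j = w j * (x j / w j) powr p" for j
  have z_nonneg: "0 \<le> z j" if "j \<in> J" for j
    using w[OF that] by (simp add: z_def)
  have z_weight: "z j * w j powr (p - 1) = x j powr p" if "j \<in> J" for j
    using w[OF that] x[OF that]
    by (simp add: z_def powr_divide powr_diff field_simps)
  have row_holder: "(\<Sum>j\<in>J. K i j * x j) powr p
      \<le> \<alpha> powr (p - 1) * (\<Sum>j\<in>J. K i j * u i powr (p - 1) * z j)" if i: "i \<in> I" for i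
  proof -
    have "(\<Sum>j\<in>J. K i j * x j) = (\<Sum>j\<in>J. (K i j * w j) * (x j / w j))"
      using w by (intro sum.cong) (auto simp: order_less_imp_not_eq2)
    also have "\<dots> powr p \<le> (\<Sum>j\<in>J. K i j * w j) powr (p - 1) * (\<Sum>j\<in>J. K i j * w j * (x j / w j) powr p)"
      using p fin K[OF i] w x by (intro weighted_sum_powr_le) (auto simp: less_imp_le)
    also have "\<dots> \<le> (\<alpha> * u i) powr (p - 1) * (\<Sum>j\<in>J. K i j * w j * (x j / w j) powr p)"
      using p row[OF i] K[OF i] w
      by (intro mult_right_mono powr_mono2 sum_nonneg) (auto simp: less_imp_le)
    also have "\<dots> = \<alpha> powr (p - 1) * (\<Sum>j\<in>J. K i j * u i powr (p - 1) * z j)"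
      using \<alpha> u[OF i] by (simp add: powr_mult z_def sum_distrib_left algebra_simps)
    finally show ?thesis .
  qed
  have "(\<Sum>i\<in>I. (\<Sum>j\<in>J. K i j * x j) powr p)
      \<le> (\<Sum>i\<in>I. \<alpha> powr (p - 1) * (\<Sum>j\<in>J. K i j * u i powr (p - 1) * z j))"
    by (intro sum_mono row_holder)
  also have "\<dots> = \<alpha> powr (p - 1) * (\<Sum>j\<in>J. z j * (\<Sum>i\<in>I. K i j * u i powr (p - 1)))"
    by (simp add: sum_distrib_left sum.swap[of _ I] algebra_simps)
  also have "\<dots> \<le> \<alpha> powr (p - 1) * (\<Sum>j\<in>J. z j * (\<beta> * w j powr (p - 1)))"
    using z_nonneg column by (intro mult_left_mono sum_mono) auto
  also have "\<dots> = \<alpha> powr (p - 1) * \<beta> * (\<Sum>j\<in>J. x j powr p)"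
    using z_weight by (simp add: sum_distrib_left algebra_simps)
  finally show ?thesis .
qed

lemma summable_suminf_le_of_sum_le:
  fixes f g :: "nat \<Rightarrow> real"
  assumes f: "\<And>n. 0 \<le> f n" and g: "\<And>n. 0 \<le> g n" "summable g" and C: "0 \<le> C"
    and partial: "\<And>N. (\<Sum>n<N. f n) \<le> C * (\<Sum>n<N. g n)"
  shows "summable f \<and> suminf f \<le> C * suminf g"
proof -
  have bound: "(\<Sum>n<N. f n) \<le> C * suminf g" for N
  proof -
    have "(\<Sum>n<N. f n) \<le> C * (\<Sum>n<N. g n)" by (rule partial)
    also have "\<dots> \<le> C * suminf g" using g C by (intro mult_left_mono sum_le_suminf) auto
    finally show ?thesis .
  qed
  have "summable f"
    using bound[of "Suc _"] f by (intro bounded_imp_summable) (auto simp: lessThan_Suc_atMost)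
  with bound show ?thesis by (simp add: suminf_le_const)
qed

lemma Lam_Suc: "Lam lam (Suc n) = Lam lam n + lam (Suc n)"
  by (simp add: Lam_def)

lemma sum_wmean_row:
  "n \<le> N \<Longrightarrow> (\<Sum>k=1..N. wmean lam n k * f k) = (\<Sum>k=1..n. lam k / Lam lam n * f k)"
  by (rule sum.mono_neutral_cong_right) (auto simp: wmean_def)

lemma sum_wmean_column:
  "1 \<le> k \<Longrightarrow> (\<Sum>n=1..N. wmean lam n k * f n) = (\<Sum>n=k..N. lam k / Lam lam n * f n)"
  by (rule sum.mono_neutral_cong_right) (auto simp: wmean_def)

locale positive_weights =
  fixes lam :: "nat \<Rightarrow> real"
  assumes lam_pos: "\<And>n. 1 \<le> n \<Longrightarrow> 0 < lam n"
begin

lemma lam_le_Lam: "1 \<le> n \<Longrightarrow> lam n \<le> Lam lam n"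
  unfolding Lam_def using lam_pos
  by (intro member_le_sum) (auto intro: less_imp_le)

lemma Lam_pos: "1 \<le> n \<Longrightarrow> 0 < Lam lam n"
  using lam_le_Lam lam_pos by (meson less_le_trans)

lemma one_le_Lam_div_lam: "1 \<le> n \<Longrightarrow> 1 \<le> Lam lam n / lam n"
  using lam_le_Lam lam_pos by simp

lemma wmean_nonneg: "0 \<le> wmean lam n k"
  using lam_pos Lam_pos by (auto simp: wmean_def intro: less_imp_le)

lemma norm_wmean_apply_le:
  assumes "n \<le> N"
  shows "norm (wmean_apply lam a n) \<le> (\<Sum>k=1..N. wmean lam n k * norm (a k))"
proof -
  have "norm (wmean_apply lam a n) \<le> (\<Sum>k=1..n. wmean lam n k * norm (a k))"
    unfolding wmean_apply_def using wmean_nonneg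
    by (auto intro!: order_trans[OF norm_sum] simp: norm_mult)
  also have "\<dots> \<le> (\<Sum>k=1..N. wmean lam n k * norm (a k))"
    using assms wmean_nonneg by (intro sum_mono2) auto
  finally show ?thesis .
qed

end

definition schur_weight :: "(nat \<Rightarrow> real) \<Rightarrow> real \<Rightarrow> nat \<Rightarrow> real" where
  "schur_weight lam c k = (\<Prod>i=1..<k. (Lam lam i / lam i) / (Lam lam (i + 1) / lam (i + 1) - c))"

lemma schur_weight_Suc:
  "1 \<le> k \<Longrightarrow> schur_weight lam c (Suc k)
     = schur_weight lam c k * ((Lam lam k / lam k) / (Lam lam (k + 1) / lam (k + 1) - c))"
  by (simp add: schur_weight_def prod.atLeastLessThan_Suc)

context positive_weights
begin

context
  fixes c :: real
  assumes c: "c < 1"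
begin

lemma schur_weight_pos: "0 < schur_weight lam c k"
proof -
  have "0 < Lam lam (i + 1) / lam (i + 1) - c" for i
    using one_le_Lam_div_lam[of "i + 1"] c by simp
  then show ?thesis
    unfolding schur_weight_def by (auto intro!: prod_pos divide_pos_pos simp: lam_pos Lam_pos)
qed

lemma schur_weight_telescope:
  assumes "1 \<le> n"
  shows "(1 - c) * (schur_weight lam c (n + 1) / Lam lam n)
    = schur_weight lam c n / lam n - schur_weight lam c (n + 1) / lam (n + 1)"
proof -
  have pos: "0 < lam n" "0 < lam (n + 1)" "0 < Lam lam n"
    using lam_pos Lam_pos assms by auto
  have "c < Lam lam (n + 1) / lam (n + 1)"
    using one_le_Lam_div_lam[of "n + 1"] c by simp
  then have "schur_weight lam c (n + 1) * ((Lam lam n + lam (n + 1)) / lam (n + 1) - c)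
      = schur_weight lam c n * (Lam lam n / lam n)"
    using schur_weight_Suc[OF assms] by (simp add: Lam_Suc)
  with pos show ?thesis by (simp add: field_simps)
qed

lemma schur_weight_column_sum:
  assumes "1 \<le> k"
  shows "(\<Sum>n=1..N. wmean lam n k * schur_weight lam c (n + 1)) \<le> schur_weight lam c k / (1 - c)"
proof -
  define D where "D n = schur_weight lam c n / lam n" for n
  have D_nonneg: "0 \<le> D n" if "1 \<le> n" for n
    using schur_weight_pos lam_pos[OF that] by (simp add: D_def less_imp_le)
  have "(1 - c) * (\<Sum>n=k..N. schur_weight lam c (n + 1) / Lam lam n) = (\<Sum>n=k..N. D n - D (Suc n))"
    using assms unfolding sum_distrib_left
    by (intro sum.cong refl) (simp add: D_def schur_weight_telescope[simplified])
  also have "\<dots> \<le> D k"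
  proof (cases "k \<le> Suc N")
    case True
    then have "(\<Sum>n=k..N. D n - D (Suc n)) = D k - D (Suc N)"
      using sum_Suc_diff[of k N "\<lambda>n. - D n"] by simp
    then show ?thesis using D_nonneg[of "Suc N"] by simp
  qed (use D_nonneg assms in simp)
  finally have "(\<Sum>n=k..N. schur_weight lam c (n + 1) / Lam lam n) \<le> D k / (1 - c)"
    using c by (simp add: field_simps)
  have "(\<Sum>n=1..N. wmean lam n k * schur_weight lam c (n + 1))
      = lam k * (\<Sum>n=k..N. schur_weight lam c (n + 1) / Lam lam n)"
    unfolding sum_wmean_column[OF assms] sum_distrib_left by simp
  also have "\<dots> \<le> lam k * (D k / (1 - c))"
    using lam_pos[OF assms] \<open>_ \<le> D k / (1 - c)\<close> by (intro mult_left_mono) auto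
  also have "\<dots> = schur_weight lam c k / (1 - c)"
    using lam_pos[OF assms] by (simp add: D_def)
  finally show ?thesis .
qed

lemma schur_weight_quotient:
  assumes "1 \<le> k" "k \<le> n"
  shows "(\<Prod>i=k..n. (Lam lam (i + 1) / lam (i + 1) - c) / (Lam lam i / lam i))
    = schur_weight lam c k / schur_weight lam c (n + 1)"
  using assms(2)
proof (induction n rule: dec_induct)
  case base
  show ?case
    using schur_weight_Suc[OF assms(1)] schur_weight_pos[of k] by simp
next
  case (step n)
  have "schur_weight lam c k / schur_weight lam c (Suc n + 1)
      = schur_weight lam c k / schur_weight lam c (n + 1)
        * ((Lam lam (Suc n + 1) / lam (Suc n + 1) - c) / (Lam lam (Suc n) / lam (Suc n)))"
    using schur_weight_Suc[of "Suc n"] by simp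
  with step show ?case by (simp add: prod.cl_ivl_Suc)
qed

lemma schur_weight_row_sum:
  assumes "1 \<le> n" "n \<le> N"
    and hyp: "(\<Sum>k=1..n. lam k / Lam lam n *
      (\<Prod>i=k..n. ((Lam lam (i + 1) / lam (i + 1) - c) / (Lam lam i / lam i)) powr q)) \<le> U"
  shows "(\<Sum>k=1..N. wmean lam n k * schur_weight lam c k powr q) \<le> U * schur_weight lam c (n + 1) powr q"
proof -
  let ?V = "schur_weight lam c"
  let ?r = "\<lambda>i. (Lam lam (i + 1) / lam (i + 1) - c) / (Lam lam i / lam i)"
  have "(\<Sum>k=1..N. wmean lam n k * ?V k powr q) = (\<Sum>k=1..n. lam k / Lam lam n * ?V k powr q)"
    by (rule sum_wmean_row[OF assms(2)])
  also have "\<dots> = (\<Sum>k=1..n. ?V (n + 1) powr q * (lam k / Lam lam n * (\<Prod>i=k..n. ?r i powr q)))"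
  proof (intro sum.cong refl)
    fix k assume k: "k \<in> {1..n}"
    have "(\<Prod>i=k..n. ?r i powr q) = (\<Prod>i=k..n. ?r i) powr q"
      by (rule prod_powr_distrib[symmetric])
    also have "\<dots> = (?V k / ?V (n + 1)) powr q"
      using k by (subst schur_weight_quotient) auto
    also have "\<dots> = ?V k powr q / ?V (n + 1) powr q"
      using schur_weight_pos by (intro powr_divide less_imp_le)
    finally show "lam k / Lam lam n * ?V k powr q = ?V (n + 1) powr q * (lam k / Lam lam n * (\<Prod>i=k..n. ?r i powr q))"
      using schur_weight_pos[of "n + 1"] by simp
  qed
  also have "\<dots> = ?V (n + 1) powr q * (\<Sum>k=1..n. lam k / Lam lam n * (\<Prod>i=k..n. ?r i powr q))"
    by (rule sum_distrib_left[symmetric])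
  also have "\<dots> \<le> ?V (n + 1) powr q * U"
    using hyp by (intro mult_left_mono) auto
  finally show ?thesis by (simp add: mult.commute)
qed

end

end

lemma (in positive_weights) wmean_partial_sums_powr_le:
  fixes p c :: real and a :: "nat \<Rightarrow> complex"
  assumes p: "1 < p" and c: "c < 1"
    and hyp: "\<And>n. 1 \<le> n \<Longrightarrow>
      (\<Sum>k=1..n. lam k / Lam lam n *
         (\<Prod>i=k..n. ((Lam lam (i+1) / lam (i+1) - c) / (Lam lam i / lam i)) powr (1 / (p - 1))))
      \<le> 1 / (1 - c)"
  shows "(\<Sum>n<N. norm (wmean_apply lam a (Suc n)) powr p)
    \<le> (1 / (1 - c)) powr p * (\<Sum>n<N. norm (a (Suc n)) powr p)"
proof -
  define U where "U = 1 / (1 - c)"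
  define w where "w k = schur_weight lam c k powr (1 / (p - 1))" for k
  have U: "0 < U" using c by (simp add: U_def)
  have w_pos: "0 < w k" for k
    using schur_weight_pos[OF c, of k] by (simp add: w_def)
  have w_powr: "w k powr (p - 1) = schur_weight lam c k" for k
    using schur_weight_pos[OF c, of k] p by (auto simp: w_def powr_powr)
  have row: "(\<Sum>k=1..N. wmean lam n k * w k) \<le> U * w (n + 1)" if "1 \<le> n" "n \<le> N" for n N
    unfolding w_def U_def using that hyp by (intro schur_weight_row_sum[OF c]) auto
  have column: "(\<Sum>n=1..N. wmean lam n k * w (n + 1) powr (p - 1)) \<le> U * w k powr (p - 1)"
    if "1 \<le> k" for k N
    unfolding w_powr U_def using schur_weight_column_sum[OF c that] by simp
  have "(\<Sum>n<N. norm (wmean_apply lam a (Suc n)) powr p) = (\<Sum>n=1..N. norm (wmean_apply lam a n) powr p)"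
    by (rule sum_bounds_lt_plus1)
  also have "\<dots> \<le> (\<Sum>n=1..N. (\<Sum>k=1..N. wmean lam n k * norm (a k)) powr p)"
    using p by (intro sum_mono powr_mono2 norm_wmean_apply_le) auto
  also have "\<dots> \<le> U powr (p - 1) * U * (\<Sum>k=1..N. norm (a k) powr p)"
    using p U w_pos wmean_nonneg row column
    by (intro schur_test_powr[where u = "\<lambda>n. w (n + 1)" and w = w]) auto
  also have "U powr (p - 1) * U = U powr p"
    using U by (simp add: powr_diff)
  also have "(\<Sum>k=1..N. norm (a k) powr p) = (\<Sum>n<N. norm (a (Suc n)) powr p)"
    by (rule sum_bounds_lt_plus1[symmetric])
  finally show ?thesis by (simp add: U_def)
qed

theorem theorem3p1:
  fixes p L :: real and lam :: "nat \<Rightarrow> real"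
  assumes p: "1 < p"
    and lam_pos: "\<And>n. 1 \<le> n \<Longrightarrow> 0 < lam n"
    and L: "0 < L" "L < p"
    and hyp: "\<And>n. 1 \<le> n \<Longrightarrow>
      (\<Sum>k=1..n. lam k / Lam lam n *
         (\<Prod>i=k..n. ((Lam lam (i+1) / lam (i+1) - L / p) / (Lam lam i / lam i)) powr (1 / (p - 1))))
      \<le> p / (p - L)"
  shows "\<And>a :: nat \<Rightarrow> complex. summable (\<lambda>n. norm (a (Suc n)) powr p) \<Longrightarrow>
      summable (\<lambda>n. norm (wmean_apply lam a (Suc n)) powr p) \<and>
      (\<Sum>n. norm (wmean_apply lam a (Suc n)) powr p)
        \<le> (p / (p - L)) powr p * (\<Sum>n. norm (a (Suc n)) powr p)"
proof -
  fix a :: "nat \<Rightarrow> complex"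
  assume "summable (\<lambda>n. norm (a (Suc n)) powr p)"
  interpret positive_weights lam by unfold_locales (rule lam_pos)
  have c: "L / p < 1" and U: "p / (p - L) = 1 / (1 - L / p)"
    using p L by (auto simp: field_simps)
  show "summable (\<lambda>n. norm (wmean_apply lam a (Suc n)) powr p) \<and>
      (\<Sum>n. norm (wmean_apply lam a (Suc n)) powr p) \<le> (p / (p - L)) powr p * (\<Sum>n. norm (a (Suc n)) powr p)"
    using p L wmean_partial_sums_powr_le[OF p c hyp[unfolded U]] \<open>summable _\<close>
    unfolding U by (intro summable_suminf_le_of_sum_le) auto
qed

end
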